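(* Under the hypotheses and notation of the context, if $\sigma_k\ge\kappa_r\alpha$ for all $k\ge0$, then $$\|z^{k+1}-z^k\|_M\le C\min_{0\le j\le k}\rho^{k-j}\|z^{j+1}-z^j\|_M\quad\text{for all }k\ge0.$$
   Context: $X$ is a finite-dimensional real Hilbert space; $T:X\rightrightarrows X$ is maximal monotone with $\Omega:=T^{-1}(0)\neq\emptyset$. $M$ is self-adjoint positive definite with $\lambda_{\max}(M)=1$; $\|z\|_M=\sqrt{\langle z,Mz\rangle}$, $\operatorname{dist}_M(z,D)=\min_{d\in D}\|d-z\|_M$, $\operatorname{dist}=\operatorname{dist}_I$. $\mathcal{J}_{\sigma M^{-1}T}:=(I+\sigma M^{-1}T)^{-1}$. $z^+$ is an output of IGPPAstep$(z,\sigma,\eta,\delta,\gamma,M)$ if $z^+=\gamma w+(1-\gamma)z$ for some $w$ with $\|w-\mathcal{J}_{\sigma M^{-1}T}(z)\|_M\le\min\{\eta,\delta\|w-z\|_M\}$. Hypotheses: $T$ satisfies bounded metric subregularity (for every $r>0$ there is $\kappa_r>0$ with $\operatorname{dist}(z,\Omega)\le\kappa_r\operatorname{dist}(0,T(z))$ for all $\|z\|\le r$); $z^0\in X$, $\gamma\in(0,2)$, $\delta\in[0,1/2)$; $\{\sigma_k\},\{\eta_k\}$ nonnegative with $\sum_k\eta_k<\infty$, $\inf_k\sigma_k>0$; $z^{k+1}$ is an output of IGPPAstep$(z^k,\sigma_k,\eta_k,\delta,\gamma,M)$ for all $k$; $\bar z^0$ is a point of $\Omega$ nearest to $z^0$ in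 $\|\cdot\|_M$; $r\ge\|\bar z^0\|+\frac{1}{\lambda_{\min}(M)}(\operatorname{dist}_M(z^0,\Omega)+\gamma\sum_k\eta_k)$ and $\kappa_r$ is a subregularity constant at this $r$; $\alpha>0$ is such that $\rho:=\frac{1}{1-\delta}\Big(\sqrt{1-\frac{\min\{\gamma,2\gamma-\gamma^2\}\alpha^2}{\alpha^2+1}}+\delta\big(\frac{\min\{\gamma,1\}}{\sqrt{\alpha^2+1}}+1\big)\Big)<1$; $C:=\frac{1+\delta}{(1-\delta)(1-\sqrt{1/(\alpha^2+1)})}$. *)

theory Defs
  imports "HOL-Analysis.Analysis"
begin

definition monotone_op :: "('a::real_inner \<Rightarrow> 'a set) \<Rightarrow> bool" where
  "monotone_op T \<longleftrightarrow> (\<forall>x y u v. u \<in> T x \<longrightarrow> v \<in> T y \<longrightarrow> 0 \<le> (x - y) \<bullet> (u - v))"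

definition maximal_monotone :: "('a::real_inner \<Rightarrow> 'a set) \<Rightarrow> bool" where
  "maximal_monotone T \<longleftrightarrow> monotone_op T \<and>
     (\<forall>x u. (\<forall>y v. v \<in> T y \<longrightarrow> 0 \<le> (x - y) \<bullet> (u - v)) \<longrightarrow> u \<in> T x)"

definition zeros :: "('a::real_vector \<Rightarrow> 'a set) \<Rightarrow> 'a set" where
  "zeros T = {z. 0 \<in> T z}"

definition self_adjoint :: "('a::real_inner \<Rightarrow> 'a) \<Rightarrow> bool" where
  "self_adjoint M \<longleftrightarrow> linear M \<and> (\<forall>x y. M x \<bullet> y = x \<bullet> M y)"

definition pos_def :: "('a::real_inner \<Rightarrow> 'a) \<Rightarrow> bool" where
  "pos_def M \<longleftrightarrow> (\<forall>x. x \<noteq> 0 \<longrightarrow> 0 < x \<bullet> M x)"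

definition eigvals :: "('a::real_vector \<Rightarrow> 'a) \<Rightarrow> real set" where
  "eigvals M = {l. \<exists>v. v \<noteq> 0 \<and> M v = l *\<^sub>R v}"

definition lambda_max :: "('a::real_vector \<Rightarrow> 'a) \<Rightarrow> real" where
  "lambda_max M = Max (eigvals M)"

definition lambda_min :: "('a::real_vector \<Rightarrow> 'a) \<Rightarrow> real" where
  "lambda_min M = Min (eigvals M)"

definition normM :: "('a::real_inner \<Rightarrow> 'a) \<Rightarrow> 'a \<Rightarrow> real" where
  "normM M z = sqrt (z \<bullet> M z)"

definition distM :: "('a::real_inner \<Rightarrow> 'a) \<Rightarrow> 'a \<Rightarrow> 'a set \<Rightarrow> real" where
  "distM M z D = Inf ((\<lambda>d. normM M (d - z)) ` D)"

text \<open>Resolvent (I + \<sigma> M^{-1} T)^{-1}(z): the w with z \<in> w + \<sigma> M^{-1} T(w),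
  i.e. M (z - w) = \<sigma> u for some u \<in> T w.\<close>
definition resolvent :: "real \<Rightarrow> ('a::real_inner \<Rightarrow> 'a) \<Rightarrow> ('a \<Rightarrow> 'a set) \<Rightarrow> 'a \<Rightarrow> 'a" where
  "resolvent \<sigma> M T z = (THE w. \<exists>u \<in> T w. M (z - w) = \<sigma> *\<^sub>R u)"

definition IGPPAstep_out ::
  "('a::real_inner \<Rightarrow> 'a set) \<Rightarrow> 'a \<Rightarrow> 'a \<Rightarrow> real \<Rightarrow> real \<Rightarrow> real \<Rightarrow> real \<Rightarrow> ('a \<Rightarrow> 'a) \<Rightarrow> bool" where
  "IGPPAstep_out T zplus z \<sigma> \<eta> \<delta> \<gamma> M \<longleftrightarrow>
     (\<exists>w. zplus = \<gamma> *\<^sub>R w + (1 - \<gamma>) *\<^sub>R z \<and>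
          normM M (w - resolvent \<sigma> M T z) \<le> min \<eta> (\<delta> * normM M (w - z)))"

text \<open>dist(0, T z) = +\<infinity> when T z = {}; then the inequality is vacuous.\<close>
definition subreg_const :: "('a::euclidean_space \<Rightarrow> 'a set) \<Rightarrow> real \<Rightarrow> real \<Rightarrow> bool" where
  "subreg_const T r \<kappa> \<longleftrightarrow> 0 < \<kappa> \<and>
     (\<forall>z. norm z \<le> r \<longrightarrow> T z \<noteq> {} \<longrightarrow> infdist z (zeros T) \<le> \<kappa> * infdist 0 (T z))"

definition bounded_metric_subregular :: "('a::euclidean_space \<Rightarrow> 'a set) \<Rightarrow> bool" where
  "bounded_metric_subregular T \<longleftrightarrow> (\<forall>r>0. \<exists>\<kappa>. subreg_const T r \<kappa>)"

end

(*
  Let D k be the M-distance from z k to Omega = zeros T and J k the exact resolvent point of z k.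
  Monotonicity gives |z k - J k|^2 + dist(J k, Omega)^2 <= (D k)^2 in the M-norm and, since
  quasi-Fejer monotonicity keeps every J k in the ball of radius r, subregularity together with
  sigma k >= kappa alpha gives alpha dist(J k, Omega) <= |z k - J k|.  By these two inequalities the
  exact relaxed step contracts D by sqrt(1 - min(gamma, 2 gamma - gamma^2) alpha^2 / (alpha^2 + 1)),
  and the inexactness costs at most gamma delta D k / (1 - delta), so D (k+1) <= rho D k.  They also
  sandwich the step length:
    gamma (1 - 1/sqrt(alpha^2 + 1)) D k / (1 + delta) <= |z (k+1) - z k| <= gamma D k / (1 - delta).
  Chaining D k <= rho^(k-j) D j between the two sides of the sandwich gives the bound for each
  j <= k.
  The resolvent exists by Minty's theorem, derived here from the Debrunner-Flor lemma and Brouwer's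
  fixed point theorem.
*)
theory Submission
  imports Defs
begin

section \<open>Spectral bounds for self-adjoint operators\<close>

lemma self_adjoint_linear: "self_adjoint M \<Longrightarrow> linear M"
  unfolding self_adjoint_def by blast

lemma self_adjoint_inner: "self_adjoint M \<Longrightarrow> M x \<bullet> y = x \<bullet> M y"
  unfolding self_adjoint_def by blast

lemma symmetric_psd_kernel:
  fixes N :: "'a::real_inner \<Rightarrow> 'a"
  assumes lin: "linear N" and sym: "\<And>x y. N x \<bullet> y = x \<bullet> N y"
    and psd: "\<And>v. 0 \<le> v \<bullet> N v" and v0: "v0 \<bullet> N v0 = 0"
  shows "N v0 = 0"
proof -
  define h where "h = N v0"
  define B where "B = h \<bullet> h"
  define c where "c = h \<bullet> N h"
  have c0: "0 \<le> c" unfolding c_def by (rule psd)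
  have expand: "(v0 + t *\<^sub>R h) \<bullet> N (v0 + t *\<^sub>R h) = 2 * t * B + t^2 * c" for t
    using v0 sym[of v0 "N v0"] unfolding c_def B_def h_def
    by (simp add: linear_add[OF lin] linear_scale[OF lin] inner_add_left inner_add_right
        power2_eq_square algebra_simps)
  \<comment> \<open>evaluate the nonnegative quadratic \<open>2 t B + t\<^sup>2 c\<close> at \<open>t = -B/(c+1)\<close>\<close>
  define t where "t = - B / (c + 1)"
  have "0 \<le> (2 * t * B + t^2 * c) * (c + 1)^2"
    using psd[of "v0 + t *\<^sub>R h"] expand[of t] by simp
  also have "\<dots> = 2 * B * (t * (c + 1)) * (c + 1) + c * (t * (c + 1))^2"
    by (simp add: power2_eq_square algebra_simps)
  also have "\<dots> = - (B^2) * (c + 2)"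
  proof -
    have "t * (c + 1) = - B" unfolding t_def using c0 by simp
    then show ?thesis by (simp add: power2_eq_square algebra_simps)
  qed
  finally have "B = 0" using c0 by (simp add: mult_le_0_iff)
  then show ?thesis unfolding B_def h_def by simp
qed

lemma self_adjoint_rayleigh_max:
  fixes M :: "'a::euclidean_space \<Rightarrow> 'a"
  assumes sa: "self_adjoint M"
  shows "\<exists>\<mu>\<in>eigvals M. \<forall>v. v \<bullet> M v \<le> \<mu> * (v \<bullet> v)"
proof -
  have lin: "linear M" using sa by (rule self_adjoint_linear)
  have "continuous_on (sphere 0 1) (\<lambda>v::'a. v \<bullet> M v)"
    using lin
    by (intro continuous_intros linear_continuous_on) (simp add: linear_conv_bounded_linear)
  moreover have "sphere (0::'a) 1 \<noteq> {}"
    using nonempty_Basis by (metis ex_in_conv mem_sphere_0 norm_Basis)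
  ultimately obtain v0 where v0: "v0 \<in> sphere (0::'a) 1"
    and max: "\<And>u. u \<in> sphere 0 1 \<Longrightarrow> u \<bullet> M u \<le> v0 \<bullet> M v0"
    using continuous_attains_sup[OF compact_sphere] by blast
  define \<mu> where "\<mu> = v0 \<bullet> M v0"
  have bound: "v \<bullet> M v \<le> \<mu> * (v \<bullet> v)" for v
  proof (cases "v = 0")
    case False
    define u where "u = inverse (norm v) *\<^sub>R v"
    have "u \<in> sphere 0 1" using False unfolding u_def by simp
    moreover have "u \<bullet> M u = (v \<bullet> M v) / (v \<bullet> v)"
      using False unfolding u_def
      by (simp add: linear_scale[OF lin] dot_square_norm power2_eq_square field_simps)
    ultimately have "(v \<bullet> M v) / (v \<bullet> v) \<le> \<mu>" using max unfolding \<mu>_def by metis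
    then show ?thesis using False by (simp add: field_simps)
  qed (simp add: linear_0[OF lin])
  define N where "N v = \<mu> *\<^sub>R v - M v" for v
  have "N v0 = 0"
  proof (rule symmetric_psd_kernel[of N])
    show "linear N" unfolding N_def linear_iff using lin
      by (simp add: linear_add linear_scale algebra_simps)
  next
    show "N x \<bullet> y = x \<bullet> N y" for x y
      unfolding N_def using self_adjoint_inner[OF sa, of x y]
      by (simp add: inner_diff_left inner_diff_right inner_commute)
  next
    show "0 \<le> v \<bullet> N v" for v using bound[of v] unfolding N_def by (simp add: inner_diff_right)
  next
    show "v0 \<bullet> N v0 = 0" using v0 unfolding N_def \<mu>_def
      by (simp add: inner_diff_right dot_square_norm)
  qed
  then have "\<mu> \<in> eigvals M" using v0 unfolding N_def eigvals_def by (auto intro!: exI[of _ v0])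
  then show ?thesis using bound by blast
qed

lemma self_adjoint_rayleigh_min:
  fixes M :: "'a::euclidean_space \<Rightarrow> 'a"
  assumes sa: "self_adjoint M"
  shows "\<exists>\<mu>\<in>eigvals M. \<forall>v. \<mu> * (v \<bullet> v) \<le> v \<bullet> M v"
proof -
  have "self_adjoint (\<lambda>x. - M x)"
    using self_adjoint_linear[OF sa] self_adjoint_inner[OF sa]
    unfolding self_adjoint_def linear_iff by (simp add: linear_add linear_scale)
  then obtain \<mu> where \<mu>: "\<mu> \<in> eigvals (\<lambda>x. - M x)" and bound: "\<And>v. v \<bullet> - M v \<le> \<mu> * (v \<bullet> v)"
    using self_adjoint_rayleigh_max by blast
  have "- \<mu> \<in> eigvals M"
  proof -
    obtain v where "v \<noteq> 0" "- M v = \<mu> *\<^sub>R v" using \<mu> unfolding eigvals_def by blast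
    then have "v \<noteq> 0 \<and> M v = (- \<mu>) *\<^sub>R v" by (metis minus_minus scaleR_minus_left)
    then show ?thesis unfolding eigvals_def by blast
  qed
  moreover have "- \<mu> * (v \<bullet> v) \<le> v \<bullet> M v" for v using bound[of v] by simp
  ultimately show ?thesis by blast
qed

lemma self_adjoint_eigvals_finite:
  fixes M :: "'a::euclidean_space \<Rightarrow> 'a"
  assumes sa: "self_adjoint M"
  shows "finite (eigvals M)"
proof -
  define e where "e l = (SOME v. v \<noteq> 0 \<and> M v = l *\<^sub>R v)" for l
  have e: "e l \<noteq> 0 \<and> M (e l) = l *\<^sub>R e l" if "l \<in> eigvals M" for l
    using that unfolding eigvals_def e_def by (rule CollectE) (rule someI_ex)
  have inj: "inj_on e (eigvals M)"
  proof (rule inj_onI)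
    fix l l' assume l: "l \<in> eigvals M" and l': "l' \<in> eigvals M" and eq: "e l = e l'"
    have "l *\<^sub>R e l = l' *\<^sub>R e l" using e[OF l] e[OF l'] eq by metis
    then show "l = l'" using e[OF l] by simp
  qed
  \<comment> \<open>eigenvectors for distinct eigenvalues are orthogonal, hence linearly independent\<close>
  have "pairwise orthogonal (e ` eigvals M)"
  proof (rule pairwiseI, clarify)
    fix l l' assume l: "l \<in> eigvals M" and l': "l' \<in> eigvals M" and ne: "e l \<noteq> e l'"
    have "M (e l) \<bullet> e l' = e l \<bullet> M (e l')" by (rule self_adjoint_inner[OF sa])
    then have "l * (e l \<bullet> e l') = l' * (e l \<bullet> e l')" using e[OF l] e[OF l'] by simp
    moreover have "l \<noteq> l'" using ne by auto
    ultimately show "orthogonal (e l) (e l')" unfolding orthogonal_def by simp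
  qed
  moreover have "0 \<notin> e ` eigvals M" using e by auto
  ultimately have "independent (e ` eigvals M)" by (rule pairwise_orthogonal_independent)
  then have "finite (e ` eigvals M)" by (rule finiteI_independent)
  then show ?thesis using inj finite_image_iff by blast
qed

lemma self_adjoint_inner_le_lambda_max:
  fixes M :: "'a::euclidean_space \<Rightarrow> 'a"
  assumes sa: "self_adjoint M"
  shows "x \<bullet> M x \<le> lambda_max M * (x \<bullet> x)"
proof -
  obtain \<mu> where "\<mu> \<in> eigvals M" and "x \<bullet> M x \<le> \<mu> * (x \<bullet> x)"
    using self_adjoint_rayleigh_max[OF sa] by blast
  moreover from this have "\<mu> \<le> lambda_max M"
    unfolding lambda_max_def using self_adjoint_eigvals_finite[OF sa] by simp
  ultimately show ?thesis using mult_right_mono[of \<mu> "lambda_max M" "x \<bullet> x"] by simp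
qed

lemma self_adjoint_lambda_min_le_inner:
  fixes M :: "'a::euclidean_space \<Rightarrow> 'a"
  assumes sa: "self_adjoint M"
  shows "lambda_min M * (x \<bullet> x) \<le> x \<bullet> M x"
proof -
  obtain \<mu> where "\<mu> \<in> eigvals M" and "\<mu> * (x \<bullet> x) \<le> x \<bullet> M x"
    using self_adjoint_rayleigh_min[OF sa] by blast
  moreover from this have "lambda_min M \<le> \<mu>"
    unfolding lambda_min_def using self_adjoint_eigvals_finite[OF sa] by simp
  ultimately show ?thesis using mult_right_mono[of "lambda_min M" \<mu> "x \<bullet> x"] by simp
qed

lemma self_adjoint_lambda_min_le_lambda_max:
  fixes M :: "'a::euclidean_space \<Rightarrow> 'a"
  assumes sa: "self_adjoint M"
  shows "lambda_min M \<le> lambda_max M"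
proof -
  obtain \<mu> where "\<mu> \<in> eigvals M" using self_adjoint_rayleigh_max[OF sa] by blast
  then show ?thesis unfolding lambda_min_def lambda_max_def
    using self_adjoint_eigvals_finite[OF sa] Max_ge[of "eigvals M" \<mu>] Min_le[of "eigvals M" \<mu>]
    by linarith
qed

lemma pos_def_eigvals_pos:
  assumes "pos_def M" and "l \<in> eigvals M"
  shows "0 < l"
proof -
  obtain v where v: "v \<noteq> 0" "M v = l *\<^sub>R v" using assms(2) unfolding eigvals_def by blast
  then have "0 < l * (v \<bullet> v)" using assms(1) unfolding pos_def_def by force
  moreover have "0 \<le> v \<bullet> v" by simp
  ultimately show ?thesis by (auto simp: zero_less_mult_iff)
qed

lemma pos_def_lambda_min_pos:
  fixes M :: "'a::euclidean_space \<Rightarrow> 'a"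
  assumes "self_adjoint M" "pos_def M"
  shows "0 < lambda_min M"
proof -
  have "eigvals M \<noteq> {}" using self_adjoint_rayleigh_min[OF assms(1)] by blast
  then show ?thesis unfolding lambda_min_def
    using Min_in self_adjoint_eigvals_finite[OF assms(1)] pos_def_eigvals_pos[OF assms(2)] by blast
qed

section \<open>The \<open>M\<close>-norm\<close>

locale spd_operator =
  fixes M :: "'a::euclidean_space \<Rightarrow> 'a"
  assumes self_adjoint_M: "self_adjoint M" and pos_def_M: "pos_def M"
begin

lemma linear_M: "linear M"
  using self_adjoint_M by (rule self_adjoint_linear)

lemma M_add [simp]: "M (x + y) = M x + M y"
  using linear_M by (rule linear_add)

lemma M_diff [simp]: "M (x - y) = M x - M y"
  using linear_M by (rule linear_diff)

lemma M_scaleR [simp]: "M (c *\<^sub>R x) = c *\<^sub>R M x"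
  using linear_M by (rule linear_scale)

lemma M_0 [simp]: "M 0 = 0"
  using linear_M by (rule linear_0)

lemma continuous_on_M: "continuous_on S M"
  using linear_M by (simp add: linear_continuous_on linear_conv_bounded_linear)

lemma inner_M_commute: "x \<bullet> M y = y \<bullet> M x"
  using self_adjoint_inner[OF self_adjoint_M, of y x] by (simp add: inner_commute)

lemma inner_M_nonneg: "0 \<le> x \<bullet> M x"
  using pos_def_M unfolding pos_def_def by (cases "x = 0") (auto intro: less_imp_le)

lemma inner_M_eq_0_iff: "x \<bullet> M x = 0 \<longleftrightarrow> x = 0"
  using pos_def_M unfolding pos_def_def by force

lemma inner_M_add_power2: "(x + y) \<bullet> M (x + y) = x \<bullet> M x + 2 * (x \<bullet> M y) + y \<bullet> M y"
  by (simp add: inner_add_left inner_add_right inner_M_commute[of y x])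

lemma inner_M_diff_power2: "(x - y) \<bullet> M (x - y) = x \<bullet> M x - 2 * (x \<bullet> M y) + y \<bullet> M y"
  by (simp add: inner_diff_left inner_diff_right inner_M_commute[of y x])

lemma normM_power2: "(normM M x)\<^sup>2 = x \<bullet> M x"
  unfolding normM_def using inner_M_nonneg by simp

lemma normM_nonneg [simp]: "0 \<le> normM M x"
  unfolding normM_def using inner_M_nonneg by simp

lemma normM_eq_0_iff [simp]: "normM M x = 0 \<longleftrightarrow> x = 0"
  unfolding normM_def using inner_M_nonneg inner_M_eq_0_iff by simp

lemma inner_M_le_normM: "x \<bullet> M y \<le> normM M x * normM M y"
proof (cases "x = 0 \<or> y = 0")
  case False
  define a b where "a = normM M x" and "b = normM M y"
  have ab: "0 < a * b" using False unfolding a_def b_def by (simp add: less_le)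
  have sq: "x \<bullet> M x = a\<^sup>2" "y \<bullet> M y = b\<^sup>2" unfolding a_def b_def by (simp_all add: normM_power2)
  have "0 \<le> (b *\<^sub>R x - a *\<^sub>R y) \<bullet> M (b *\<^sub>R x - a *\<^sub>R y)" by (rule inner_M_nonneg)
  also have "\<dots> = 2 * (a * b) * (a * b - x \<bullet> M y)"
    unfolding inner_M_diff_power2 by (simp add: sq power2_eq_square algebra_simps)
  finally show ?thesis using ab unfolding a_def b_def by (simp add: zero_le_mult_iff)
qed auto

lemma normM_triangle: "normM M (x + y) \<le> normM M x + normM M y"
proof -
  have "(x + y) \<bullet> M (x + y) \<le> (normM M x + normM M y)\<^sup>2"
    using inner_M_add_power2[of x y] inner_M_le_normM[of x y] normM_power2[of x] normM_power2[of y]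
    by (simp add: power2_sum)
  then show ?thesis unfolding normM_def[of M "x + y"] by (intro real_le_lsqrt) simp_all
qed

lemma normM_scaleR: "normM M (c *\<^sub>R x) = \<bar>c\<bar> * normM M x"
  unfolding normM_def
  by (simp add: real_sqrt_mult mult.assoc[symmetric] power2_eq_square[symmetric])

lemma normM_minus_commute: "normM M (x - y) = normM M (y - x)"
  using normM_scaleR[of "-1" "x - y"] by simp

lemma normM_triangle_diff: "normM M (x - z) \<le> normM M (x - y) + normM M (y - z)"
  using normM_triangle[of "x - y" "y - z"] by simp

lemma normM_convex_combination_power2:
  "(normM M ((1 - g) *\<^sub>R x + g *\<^sub>R y))\<^sup>2 =
     (1 - g) * (normM M x)\<^sup>2 + g * (normM M y)\<^sup>2 - g * (1 - g) * (normM M (x - y))\<^sup>2"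
  unfolding normM_power2
  by (simp add: inner_add_left inner_add_right inner_diff_left inner_diff_right
      inner_M_commute[of y x] algebra_simps power2_eq_square)

lemma lambda_min_pos: "0 < lambda_min M"
  using self_adjoint_M pos_def_M by (rule pos_def_lambda_min_pos)

lemma lambda_max_pos: "0 < lambda_max M"
  using lambda_min_pos self_adjoint_lambda_min_le_lambda_max[OF self_adjoint_M] by linarith

lemma normM_le_norm: "normM M x \<le> sqrt (lambda_max M) * norm x"
proof -
  have "x \<bullet> M x \<le> lambda_max M * (norm x)\<^sup>2"
    using self_adjoint_inner_le_lambda_max[OF self_adjoint_M] by (simp add: power2_norm_eq_inner)
  then show ?thesis unfolding normM_def
    by (metis norm_ge_zero real_sqrt_abs real_sqrt_le_mono real_sqrt_mult abs_norm_cancel)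
qed

lemma norm_le_normM: "sqrt (lambda_min M) * norm x \<le> normM M x"
proof -
  have "lambda_min M * (norm x)\<^sup>2 \<le> x \<bullet> M x"
    using self_adjoint_lambda_min_le_inner[OF self_adjoint_M] by (simp add: power2_norm_eq_inner)
  then show ?thesis unfolding normM_def
    by (metis norm_ge_zero real_sqrt_abs real_sqrt_le_mono real_sqrt_mult abs_norm_cancel)
qed

lemma norm_M_le_normM: "norm (M x) \<le> sqrt (lambda_max M) * normM M x"
proof -
  have "norm (M x) * norm (M x) = M x \<bullet> M x" by (simp add: dot_square_norm power2_eq_square)
  also have "\<dots> = x \<bullet> M (M x)" by (rule self_adjoint_inner[OF self_adjoint_M])
  also have "\<dots> \<le> normM M x * normM M (M x)" by (rule inner_M_le_normM)
  also have "\<dots> \<le> normM M x * (sqrt (lambda_max M) * norm (M x))"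
    by (intro mult_left_mono normM_le_norm normM_nonneg)
  finally have "norm (M x) * norm (M x) \<le> (sqrt (lambda_max M) * normM M x) * norm (M x)"
    by (simp add: algebra_simps)
  then show ?thesis using lambda_max_pos by (cases "M x = 0") (simp_all add: mult_le_cancel_right)
qed

lemma distM_le: "q \<in> S \<Longrightarrow> distM M x S \<le> normM M (q - x)"
  unfolding distM_def by (rule cInf_lower) (auto intro: bdd_belowI[of _ 0])

lemma distM_nonneg: "S \<noteq> {} \<Longrightarrow> 0 \<le> distM M x S"
  unfolding distM_def by (rule cInf_greatest) auto

lemma distM_eqI:
  "p \<in> S \<Longrightarrow> (\<And>q. q \<in> S \<Longrightarrow> normM M (p - x) \<le> normM M (q - x)) \<Longrightarrow> distM M x S = normM M (p - x)"
  unfolding distM_def by (rule cInf_eq_minimum) auto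

lemma distM_attained:
  assumes S: "closed S" "S \<noteq> {}"
  obtains p where "p \<in> S" "distM M x S = normM M (p - x)"
proof -
  obtain q0 where q0: "q0 \<in> S" using S(2) by blast
  \<comment> \<open>minimize over the compact set of points that are not farther away than \<open>q0\<close>\<close>
  define R where "R = normM M (q0 - x) / sqrt (lambda_min M)"
  define K where "K = S \<inter> cball x R"
  have far: "normM M (q0 - x) < normM M (q - x)" if "q \<notin> cball x R" for q
  proof -
    have "normM M (q0 - x) < sqrt (lambda_min M) * norm (q - x)"
      using that lambda_min_pos unfolding R_def
      by (simp add: dist_norm norm_minus_commute field_simps)
    also have "\<dots> \<le> normM M (q - x)" by (rule norm_le_normM)
    finally show ?thesis .
  qed
  have "q0 \<in> K" using q0 far[of q0] unfolding K_def by force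
  moreover have "compact K" unfolding K_def using S(1) by (intro closed_Int_compact compact_cball)
  moreover have "continuous_on K (\<lambda>q. normM M (q - x))"
    unfolding normM_def M_diff by (intro continuous_intros continuous_on_M)
  ultimately obtain p where p: "p \<in> K" and min: "\<And>q. q \<in> K \<Longrightarrow> normM M (p - x) \<le> normM M (q - x)"
    using continuous_attains_inf[of K] by blast
  have "normM M (p - x) \<le> normM M (q - x)" if "q \<in> S" for q
    using that min[of q] min[OF \<open>q0 \<in> K\<close>] far[of q] unfolding K_def by force
  then show ?thesis using that p distM_eqI unfolding K_def by blast
qed

lemma distM_le_infdist:
  assumes "closed S" "S \<noteq> {}"
  shows "distM M x S \<le> sqrt (lambda_max M) * infdist x S"
proof -
  obtain q where "q \<in> S" "infdist x S = dist x q"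
    using infdist_attains_inf[OF assms] by blast
  then show ?thesis
    using distM_le[of q S x] normM_le_norm[of "q - x"] by (simp add: dist_norm norm_minus_commute)
qed

lemma distM_le_distM_add:
  assumes "closed S" "S \<noteq> {}"
  shows "distM M x S \<le> distM M y S + normM M (x - y)"
proof -
  obtain p where "p \<in> S" "distM M y S = normM M (p - y)" using distM_attained[OF assms] by blast
  moreover have "normM M (p - x) \<le> normM M (p - y) + normM M (y - x)" by (rule normM_triangle_diff)
  ultimately show ?thesis using distM_le[of p S x] normM_minus_commute[of y x] by simp
qed

lemma inexact_point_normM_bounds:
  assumes "normM M (w - J) \<le> \<delta> * normM M (w - z)"
  shows "(1 - \<delta>) * normM M (w - z) \<le> normM M (z - J)"
    and "normM M (z - J) \<le> (1 + \<delta>) * normM M (w - z)"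
proof -
  have "normM M (w - z) \<le> normM M (w - J) + normM M (z - J)"
    using normM_triangle_diff[of w z J] normM_minus_commute[of J z] by simp
  then show "(1 - \<delta>) * normM M (w - z) \<le> normM M (z - J)" using assms by (simp add: algebra_simps)
  have "normM M (z - J) \<le> normM M (w - z) + normM M (w - J)"
    using normM_triangle_diff[of z J w] normM_minus_commute[of z w] by simp
  then show "normM M (z - J) \<le> (1 + \<delta>) * normM M (w - z)" using assms by (simp add: algebra_simps)
qed

end

section \<open>Maximal monotone operators and the resolvent\<close>

lemma maximal_monotoneD:
  "maximal_monotone T \<Longrightarrow> u \<in> T x \<Longrightarrow> v \<in> T y \<Longrightarrow> 0 \<le> (x - y) \<bullet> (u - v)"
  unfolding maximal_monotone_def monotone_op_def by blast

lemma maximal_monotone_memI: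
  "maximal_monotone T \<Longrightarrow> (\<And>y v. v \<in> T y \<Longrightarrow> 0 \<le> (x - y) \<bullet> (u - v)) \<Longrightarrow> u \<in> T x"
  unfolding maximal_monotone_def by blast

lemma maximal_monotone_zeros_eq:
  assumes "maximal_monotone T"
  shows "zeros T = (\<Inter>(y, v)\<in>{(y, v). v \<in> T y}. {x. x \<bullet> v \<le> y \<bullet> v})"
proof -
  have "x \<in> zeros T \<longleftrightarrow> (\<forall>y v. v \<in> T y \<longrightarrow> 0 \<le> (x - y) \<bullet> (0 - v))" for x
    unfolding zeros_def
    using maximal_monotoneD[OF assms, of 0 x] maximal_monotone_memI[OF assms, of x 0]
    by blast
  then show ?thesis by (auto simp: inner_diff_left)
qed

lemma closed_zeros:
  fixes T :: "'a::euclidean_space \<Rightarrow> 'a set"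
  assumes "maximal_monotone T"
  shows "closed (zeros T)"
proof -
  have "closed {x. x \<bullet> v \<le> y \<bullet> v}" for y v :: 'a
    using closed_halfspace_le[of v "y \<bullet> v"] by (simp add: inner_commute)
  then show ?thesis unfolding maximal_monotone_zeros_eq[OF assms] by (intro closed_INT) auto
qed

lemma convex_zeros:
  fixes T :: "'a::euclidean_space \<Rightarrow> 'a set"
  assumes "maximal_monotone T"
  shows "convex (zeros T)"
proof -
  have "convex {x. x \<bullet> v \<le> y \<bullet> v}" for y v :: 'a
    using convex_halfspace_le[of v "y \<bullet> v"] by (simp add: inner_commute)
  then show ?thesis unfolding maximal_monotone_zeros_eq[OF assms] by (intro convex_INT) auto
qed

lemma monotone_convex_combination_nonneg:
  fixes F :: "('a::real_inner \<times> 'a) set"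
  assumes fin: "finite F"
    and mono: "\<And>g g'. g \<in> F \<Longrightarrow> g' \<in> F \<Longrightarrow> 0 \<le> (fst g - fst g') \<bullet> (snd g - snd g')"
    and b: "\<And>g. 0 \<le> b g" "(\<Sum>g\<in>F. b g) = 1" and x: "(\<Sum>g\<in>F. b g *\<^sub>R (fst g - x)) = 0"
  shows "0 \<le> (\<Sum>g\<in>F. b g * ((snd g - v) \<bullet> (fst g - x)))"
proof -
  define a where "a g g' = (snd g' - v) \<bullet> (fst g - x)" for g g' :: "'a \<times> 'a"
  define S where "S = (\<Sum>g\<in>F. \<Sum>g'\<in>F. b g * b g' * a g g')"
  have "S = (\<Sum>g'\<in>F. b g' * ((snd g' - v) \<bullet> (\<Sum>g\<in>F. b g *\<^sub>R (fst g - x))))"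
    unfolding S_def a_def
    by (subst sum.swap) (simp add: inner_sum_right sum_distrib_left algebra_simps)
  then have "S = 0" unfolding x by simp
  \<comment> \<open>monotonicity of \<open>F\<close> says exactly \<open>a g g' + a g' g \<le> a g g + a g' g'\<close>\<close>
  have "S = (\<Sum>g\<in>F. \<Sum>g'\<in>F. b g * b g' * a g' g)"
    unfolding S_def by (subst sum.swap) (simp add: mult.commute)
  then have "2 * S = (\<Sum>g\<in>F. \<Sum>g'\<in>F. b g * b g' * (a g g' + a g' g))"
    unfolding S_def by (simp add: algebra_simps sum.distrib)
  also have "\<dots> \<le> (\<Sum>g\<in>F. \<Sum>g'\<in>F. b g * b g' * (a g g + a g' g'))"
  proof (intro sum_mono mult_left_mono)
    fix g g' assume "g \<in> F" "g' \<in> F"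
    then show "a g g' + a g' g \<le> a g g + a g' g'"
      using mono[of g g'] unfolding a_def
      by (simp add: inner_diff_left inner_diff_right inner_commute algebra_simps)
  qed (simp add: b)
  also have "\<dots> = 2 * (\<Sum>g\<in>F. b g * a g g)"
    by (simp add: algebra_simps sum.distrib sum_distrib_left[symmetric] sum_distrib_right[symmetric]
        b(2))
  finally show ?thesis using \<open>S = 0\<close> unfolding a_def by simp
qed

lemma debrunner_flor_finite:
  fixes F :: "('a::euclidean_space \<times> 'a) set" and \<phi> :: "'a \<Rightarrow> 'a"
  assumes fin: "finite F" and ne: "F \<noteq> {}"
    and mono: "\<And>g g'. g \<in> F \<Longrightarrow> g' \<in> F \<Longrightarrow> 0 \<le> (fst g - fst g') \<bullet> (snd g - snd g')"
    and cont: "continuous_on UNIV \<phi>"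
  shows "\<exists>x. \<forall>g\<in>F. 0 \<le> (snd g - \<phi> x) \<bullet> (fst g - x)"
proof (rule ccontr)
  \<comment> \<open>otherwise a partition of unity subordinate to the violated inequalities defines a
    self-map of \<open>convex hull (fst ` F)\<close>, whose Brouwer fixed point contradicts monotonicity\<close>
  assume "\<not> ?thesis"
  then have violated: "\<exists>g\<in>F. (snd g - \<phi> x) \<bullet> (fst g - x) < 0" for x by (auto simp: not_le)
  define h where "h g x = max 0 (- ((snd g - \<phi> x) \<bullet> (fst g - x)))" for g x
  define H where "H x = (\<Sum>g\<in>F. h g x)" for x
  have h_nonneg: "0 \<le> h g x" for g x unfolding h_def by simp
  have H_pos: "0 < H x" for x
  proof -
    obtain g where "g \<in> F" "(snd g - \<phi> x) \<bullet> (fst g - x) < 0" using violated by blast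
    then show ?thesis unfolding H_def h_def by (intro sum_pos2[OF fin, of g]) auto
  qed
  define p where "p x = (\<Sum>g\<in>F. (h g x / H x) *\<^sub>R fst g)" for x
  define C where "C = convex hull (fst ` F)"
  have sum_one: "(\<Sum>g\<in>F. h g x / H x) = 1" for x
    using H_pos[of x] unfolding H_def by (simp add: sum_divide_distrib[symmetric])
  have "continuous_on C p"
  proof -
    have "continuous_on UNIV (h g)" for g unfolding h_def by (intro continuous_intros cont)
    then show ?thesis unfolding p_def H_def using H_pos[unfolded H_def]
      by (intro continuous_intros) (auto intro: continuous_on_subset simp: less_imp_neq[symmetric])
  qed
  moreover have "p \<in> C \<rightarrow> C"
    unfolding p_def C_def
    by (intro Pi_I convex_sum[OF fin convex_convex_hull sum_one])
      (auto simp: h_nonneg H_pos hull_inc less_imp_le)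
  moreover have "compact C" "convex C" "C \<noteq> {}"
    unfolding C_def using fin ne by (simp_all add: compact_convex_hull finite_imp_compact)
  ultimately obtain x0 where "p x0 = x0" using brouwer by metis
  define b where "b g = h g x0 / H x0" for g
  have "(\<Sum>g\<in>F. b g *\<^sub>R (fst g - x0)) = p x0 - (\<Sum>g\<in>F. b g) *\<^sub>R x0"
    unfolding b_def p_def by (simp add: scaleR_diff_right sum_subtractf scaleR_sum_left)
  then have "(\<Sum>g\<in>F. b g *\<^sub>R (fst g - x0)) = 0" using \<open>p x0 = x0\<close> sum_one unfolding b_def by simp
  then have "0 \<le> (\<Sum>g\<in>F. b g * ((snd g - \<phi> x0) \<bullet> (fst g - x0)))"
    using fin mono sum_one[of x0] h_nonneg H_pos[of x0] unfolding b_def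
    by (intro monotone_convex_combination_nonneg) (auto intro: divide_nonneg_pos)
  moreover have "(\<Sum>g\<in>F. b g * ((snd g - \<phi> x0) \<bullet> (fst g - x0))) = - (\<Sum>g\<in>F. (h g x0)\<^sup>2 / H x0)"
    unfolding b_def h_def
    by (auto simp: max_def power2_eq_square sum_negf[symmetric] intro!: sum.cong)
  moreover have "0 < (\<Sum>g\<in>F. (h g x0)\<^sup>2 / H x0)"
  proof -
    obtain g where "g \<in> F" "(snd g - \<phi> x0) \<bullet> (fst g - x0) < 0" using violated by blast
    then show ?thesis using H_pos[of x0] unfolding h_def by (intro sum_pos2[OF fin, of g]) auto
  qed
  ultimately show False by linarith
qed

lemma maximal_monotone_solvable:
  fixes T :: "'a::euclidean_space \<Rightarrow> 'a set" and \<phi> :: "'a \<Rightarrow> 'a"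
  assumes mm: "maximal_monotone T" and cont: "continuous_on UNIV \<phi>"
    and coercive: "\<And>y v. v \<in> T y \<Longrightarrow> bounded {x. 0 \<le> (v - \<phi> x) \<bullet> (y - x)}"
  shows "\<exists>x. \<phi> x \<in> T x"
proof -
  define G where "G = {(y, v). v \<in> T y}"
  define K where "K g = {x. 0 \<le> (snd g - \<phi> x) \<bullet> (fst g - x)}" for g
  have closed_K: "closed (K g)" for g
    unfolding K_def by (intro closed_Collect_le continuous_intros cont)
  have monotone_G: "0 \<le> (fst g - fst g') \<bullet> (snd g - snd g')" if "g \<in> G" "g' \<in> G" for g g'
    using that maximal_monotoneD[OF mm] unfolding G_def by auto
  obtain g0 where g0: "g0 \<in> G"
  proof (cases "G = {}")
    case True
    then have "0 \<in> T 0" using maximal_monotone_memI[OF mm, of 0 0] unfolding G_def by auto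
    with True show ?thesis unfolding G_def by auto
  qed blast
  \<comment> \<open>the closed sets \<open>K g\<close> have the finite intersection property by Debrunner--Flor,
    and \<open>K g0\<close> is compact by coercivity\<close>
  have "compact (K g0)"
    using closed_K coercive[of "snd g0" "fst g0"] g0 unfolding K_def G_def
    by (auto simp: compact_eq_bounded_closed)
  then have "K g0 \<inter> (\<Inter>g\<in>G. K g) \<noteq> {}"
  proof (rule compact_imp_fip_image[OF _ closed_K])
    fix I assume "finite I" "I \<subseteq> G"
    then have "insert g0 I \<subseteq> G" "finite (insert g0 I)" using g0 by auto
    then have "\<exists>x. \<forall>g\<in>insert g0 I. 0 \<le> (snd g - \<phi> x) \<bullet> (fst g - x)"
      by (intro debrunner_flor_finite cont) (auto intro: monotone_G)
    then show "K g0 \<inter> (\<Inter>g\<in>I. K g) \<noteq> {}" unfolding K_def by auto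
  qed
  then obtain x where x: "\<forall>g\<in>G. 0 \<le> (snd g - \<phi> x) \<bullet> (fst g - x)" unfolding K_def by auto
  have "\<phi> x \<in> T x"
  proof (rule maximal_monotone_memI[OF mm])
    fix y v assume "v \<in> T y"
    then have "0 \<le> (v - \<phi> x) \<bullet> (y - x)" using x unfolding G_def by auto
    also have "(v - \<phi> x) \<bullet> (y - x) = (x - y) \<bullet> (\<phi> x - v)"
      by (simp add: inner_diff_left inner_diff_right inner_commute algebra_simps)
    finally show "0 \<le> (x - y) \<bullet> (\<phi> x - v)" .
  qed
  then show ?thesis ..
qed

context spd_operator
begin

lemma resolvent_coercive:
  assumes \<sigma>: "0 < \<sigma>"
  shows "bounded {x. 0 \<le> (v - (1 / \<sigma>) *\<^sub>R M (z - x)) \<bullet> (y - x)}"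
proof -
  define A where "A = \<sigma> * norm v + norm (M (z - y))"
  have "norm (x - y) \<le> A / lambda_min M" if "0 \<le> (v - (1 / \<sigma>) *\<^sub>R M (z - x)) \<bullet> (y - x)" for x
  proof -
    define d where "d = x - y"
    have "0 \<le> \<sigma> * ((v - (1 / \<sigma>) *\<^sub>R M (z - x)) \<bullet> (y - x))" using that \<sigma> by simp
    also have "\<dots> = - \<sigma> * (v \<bullet> d) + M (z - y) \<bullet> d - d \<bullet> M d"
      using \<sigma> unfolding d_def
      by (simp add: inner_diff_left inner_diff_right inner_commute algebra_simps)
    also have "\<dots> \<le> A * norm d - d \<bullet> M d"
    proof -
      have "- (v \<bullet> d) \<le> norm v * norm d" using Cauchy_Schwarz_ineq2[of v d]
        by (simp add: abs_le_iff)
      then have "- \<sigma> * (v \<bullet> d) \<le> \<sigma> * (norm v * norm d)"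
        using mult_left_mono[of "- (v \<bullet> d)" "norm v * norm d" \<sigma>] \<sigma> by simp
      moreover have "M (z - y) \<bullet> d \<le> norm (M (z - y)) * norm d" by (rule norm_cauchy_schwarz)
      ultimately show ?thesis unfolding A_def by (simp add: algebra_simps)
    qed
    finally have "(lambda_min M * norm d) * norm d \<le> A * norm d"
      using self_adjoint_lambda_min_le_inner[OF self_adjoint_M, of d]
      by (simp add: dot_square_norm power2_eq_square mult.assoc)
    then have "lambda_min M * norm d \<le> A"
      using \<sigma> unfolding A_def by (cases "d = 0") (simp_all add: mult_le_cancel_right_pos)
    then show ?thesis using lambda_min_pos unfolding d_def
      by (simp add: pos_le_divide_eq mult.commute)
  qed
  then show ?thesis
    by (intro bounded_subset[OF bounded_cball[of y "A / lambda_min M"]])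
      (auto simp: dist_norm norm_minus_commute)
qed

lemma resolvent_unique:
  assumes mm: "maximal_monotone T" and \<sigma>: "0 < \<sigma>"
    and w1: "u1 \<in> T w1" "M (z - w1) = \<sigma> *\<^sub>R u1"
    and w2: "u2 \<in> T w2" "M (z - w2) = \<sigma> *\<^sub>R u2"
  shows "w1 = w2"
proof -
  have "\<sigma> *\<^sub>R (u1 - u2) = - M (w1 - w2)"
    using w1(2) w2(2) by (simp add: scaleR_diff_right algebra_simps)
  then have "\<sigma> * ((w1 - w2) \<bullet> (u1 - u2)) = - ((w1 - w2) \<bullet> M (w1 - w2))"
    by (metis inner_minus_right inner_scaleR_right)
  moreover have "0 \<le> (w1 - w2) \<bullet> (u1 - u2)" using maximal_monotoneD[OF mm w1(1) w2(1)] .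
  ultimately have "(w1 - w2) \<bullet> M (w1 - w2) \<le> 0" using \<sigma>
    by (metis neg_0_le_iff_le zero_le_mult_iff less_imp_le)
  then show ?thesis using inner_M_nonneg[of "w1 - w2"] inner_M_eq_0_iff[of "w1 - w2"] by simp
qed

lemma resolvent_spec:
  assumes mm: "maximal_monotone T" and \<sigma>: "0 < \<sigma>"
  shows "\<exists>u\<in>T (resolvent \<sigma> M T z). M (z - resolvent \<sigma> M T z) = \<sigma> *\<^sub>R u"
proof -
  have "continuous_on UNIV (\<lambda>x. (1 / \<sigma>) *\<^sub>R M (z - x))"
    unfolding M_diff by (intro continuous_intros continuous_on_M)
  then obtain x where "(1 / \<sigma>) *\<^sub>R M (z - x) \<in> T x"
    using maximal_monotone_solvable[OF mm] resolvent_coercive[OF \<sigma>] by blast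
  then have "\<exists>u\<in>T x. M (z - x) = \<sigma> *\<^sub>R u" using \<sigma> by force
  then have "\<exists>!w. \<exists>u\<in>T w. M (z - w) = \<sigma> *\<^sub>R u" using resolvent_unique[OF mm \<sigma>] by blast
  then show ?thesis unfolding resolvent_def by (rule theI')
qed

lemma resolvent_zeros_inner_nonneg:
  assumes mm: "maximal_monotone T" and \<sigma>: "0 < \<sigma>" and q: "q \<in> zeros T"
  shows "0 \<le> (resolvent \<sigma> M T z - q) \<bullet> M (z - resolvent \<sigma> M T z)"
proof -
  obtain u where u: "u \<in> T (resolvent \<sigma> M T z)" "M (z - resolvent \<sigma> M T z) = \<sigma> *\<^sub>R u"
    using resolvent_spec[OF mm \<sigma>] by blast
  have "0 \<le> (resolvent \<sigma> M T z - q) \<bullet> (u - 0)"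
    using q unfolding zeros_def by (intro maximal_monotoneD[OF mm u(1)]) simp
  then show ?thesis unfolding u(2) using \<sigma> by simp
qed

lemma normM_power2_add_le:
  assumes "0 \<le> (J - q) \<bullet> M (z - J)"
  shows "(normM M (z - J))\<^sup>2 + (normM M (J - q))\<^sup>2 \<le> (normM M (z - q))\<^sup>2"
  using assms inner_M_add_power2[of "z - J" "J - q"] inner_M_commute[of "z - J" "J - q"]
  by (simp add: normM_power2)

lemma normM_relaxation_power2:
  "(normM M (z + \<gamma> *\<^sub>R (J - z) - q))\<^sup>2 =
     (normM M (J - q))\<^sup>2 + 2 * (1 - \<gamma>) * ((J - q) \<bullet> M (z - J)) + (1 - \<gamma>)\<^sup>2 * (normM M (z - J))\<^sup>2"
proof -
  have "z + \<gamma> *\<^sub>R (J - z) - q = (J - q) + (1 - \<gamma>) *\<^sub>R (z - J)" by (simp add: algebra_simps)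
  then show ?thesis
    unfolding normM_power2 inner_M_add_power2
    by (simp add: inner_M_commute power2_eq_square algebra_simps)
qed

lemma relaxation_fejer:
  assumes "0 \<le> (J - q) \<bullet> M (z - J)" and "0 \<le> \<gamma>" "\<gamma> \<le> 2"
  shows "normM M (z + \<gamma> *\<^sub>R (J - z) - q) \<le> normM M (z - q)"
proof -
  define p E where "p = (J - q) \<bullet> M (z - J)" and "E = (normM M (z - J))\<^sup>2"
  have "(normM M (z - q))\<^sup>2 - (normM M (z + \<gamma> *\<^sub>R (J - z) - q))\<^sup>2 = 2 * \<gamma> * p + \<gamma> * (2 - \<gamma>) * E"
    using inner_M_add_power2[of "z - J" "J - q"] inner_M_commute[of "z - J" "J - q"]
    unfolding normM_relaxation_power2 p_def E_def normM_power2
    by (simp add: inner_M_commute power2_eq_square algebra_simps)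
  moreover have "0 \<le> 2 * \<gamma> * p + \<gamma> * (2 - \<gamma>) * E"
    using assms unfolding p_def E_def by simp
  ultimately have "(normM M (z + \<gamma> *\<^sub>R (J - z) - q))\<^sup>2 \<le> (normM M (z - q))\<^sup>2" by linarith
  then show ?thesis by (rule power2_le_imp_le) simp
qed

end

section \<open>Convergence of the inexact relaxed proximal point method\<close>

text \<open>\<open>inexact_rate \<gamma> \<delta> \<alpha>\<close> is the rate \<open>\<rho>\<close> of the statement; \<open>exact_rate \<gamma> \<alpha>\<close> is the
  factor by which an exact relaxed step \<open>z + \<gamma> (J - z)\<close> contracts the distance to the zeros.\<close>

definition exact_rate :: "real \<Rightarrow> real \<Rightarrow> real" where
  "exact_rate \<gamma> \<alpha> = sqrt (1 - min \<gamma> (2 * \<gamma> - \<gamma>\<^sup>2) * \<alpha>\<^sup>2 / (\<alpha>\<^sup>2 + 1))"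

definition inexact_rate :: "real \<Rightarrow> real \<Rightarrow> real \<Rightarrow> real" where
  "inexact_rate \<gamma> \<delta> \<alpha> = (1 / (1 - \<delta>)) * (exact_rate \<gamma> \<alpha> + \<delta> * (min \<gamma> 1 / sqrt (\<alpha>\<^sup>2 + 1) + 1))"

lemma exact_rate_power2:
  assumes "0 < \<gamma>" "\<gamma> < 2"
  shows "(exact_rate \<gamma> \<alpha>)\<^sup>2 = 1 - min \<gamma> (2 * \<gamma> - \<gamma>\<^sup>2) * \<alpha>\<^sup>2 / (\<alpha>\<^sup>2 + 1)"
proof -
  have "min \<gamma> (2 * \<gamma> - \<gamma>\<^sup>2) \<le> 1"
    using assms zero_le_power2[of "\<gamma> - 1"] by (simp add: power2_eq_square algebra_simps)
  moreover have "0 \<le> min \<gamma> (2 * \<gamma> - \<gamma>\<^sup>2)" using assms by (simp add: power2_eq_square)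
  ultimately have "min \<gamma> (2 * \<gamma> - \<gamma>\<^sup>2) * \<alpha>\<^sup>2 \<le> \<alpha>\<^sup>2 + 1"
    using mult_right_mono[of "min \<gamma> (2 * \<gamma> - \<gamma>\<^sup>2)" 1 "\<alpha>\<^sup>2"] by simp
  moreover have "0 < \<alpha>\<^sup>2 + 1" by (simp add: add_nonneg_pos)
  ultimately have "min \<gamma> (2 * \<gamma> - \<gamma>\<^sup>2) * \<alpha>\<^sup>2 / (\<alpha>\<^sup>2 + 1) \<le> 1"
    by (simp add: pos_divide_le_eq)
  then show ?thesis unfolding exact_rate_def by simp
qed

lemma exact_rate_nonneg: "0 < \<gamma> \<Longrightarrow> \<gamma> < 2 \<Longrightarrow> 0 \<le> exact_rate \<gamma> \<alpha>"
  by (metis exact_rate_def real_sqrt_ge_zero exact_rate_power2 zero_le_power2)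

lemma underrelaxed_le_exact_rate:
  fixes X D b \<gamma> \<alpha> :: real
  assumes \<gamma>: "0 < \<gamma>" "\<gamma> \<le> 1" and D: "0 \<le> D"
    and b: "(1 + \<alpha>\<^sup>2) * b\<^sup>2 \<le> D\<^sup>2" and X: "X\<^sup>2 \<le> (1 - \<gamma>) * D\<^sup>2 + \<gamma> * b\<^sup>2"
  shows "X \<le> exact_rate \<gamma> \<alpha> * D"
proof -
  have min: "min \<gamma> (2 * \<gamma> - \<gamma>\<^sup>2) = \<gamma>" using \<gamma> by (simp add: power2_eq_square min_def mult_left_le)
  have pos: "0 < 1 + \<alpha>\<^sup>2" "0 < \<alpha>\<^sup>2 + 1" by (simp_all add: add_pos_nonneg add_nonneg_pos)
  have "\<gamma> * b\<^sup>2 \<le> \<gamma> * (D\<^sup>2 / (1 + \<alpha>\<^sup>2))"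
    using b \<gamma> by (intro mult_left_mono) (simp_all add: pos_le_divide_eq add_pos_nonneg mult.commute)
  then have "X\<^sup>2 \<le> (1 - \<gamma>) * D\<^sup>2 + \<gamma> * (D\<^sup>2 / (1 + \<alpha>\<^sup>2))" using X by linarith
  also have "\<dots> = (1 - \<gamma> * \<alpha>\<^sup>2 / (\<alpha>\<^sup>2 + 1)) * D\<^sup>2"
    using pos by (simp add: field_simps)
  finally have "X\<^sup>2 \<le> (1 - \<gamma> * \<alpha>\<^sup>2 / (\<alpha>\<^sup>2 + 1)) * D\<^sup>2" .
  then have "X \<le> sqrt ((1 - \<gamma> * \<alpha>\<^sup>2 / (\<alpha>\<^sup>2 + 1)) * D\<^sup>2)" by (rule real_le_rsqrt)
  then show ?thesis using D unfolding exact_rate_def min by (simp add: real_sqrt_mult)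
qed

lemma overrelaxed_le_exact_rate:
  fixes X D a b \<gamma> \<alpha> :: real
  assumes \<gamma>: "1 < \<gamma>" "\<gamma> < 2" and D: "0 \<le> D"
    and ab: "a\<^sup>2 + b\<^sup>2 \<le> D\<^sup>2" and ba: "\<alpha>\<^sup>2 * b\<^sup>2 \<le> a\<^sup>2" and X: "X\<^sup>2 \<le> b\<^sup>2 + (\<gamma> - 1)\<^sup>2 * a\<^sup>2"
  shows "X \<le> exact_rate \<gamma> \<alpha> * D"
proof -
  have pos: "0 < 1 + \<alpha>\<^sup>2" "0 < \<alpha>\<^sup>2 + 1" by (simp_all add: add_pos_nonneg add_nonneg_pos)
  define c where "c = (\<gamma> - 1)\<^sup>2"
  have c: "0 \<le> c" "c \<le> 1" unfolding c_def using \<gamma> by (auto simp: power2_eq_square mult_le_one)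
  have min: "min \<gamma> (2 * \<gamma> - \<gamma>\<^sup>2) = 2 * \<gamma> - \<gamma>\<^sup>2"
    using \<gamma> by (simp add: power2_eq_square min_def)
  \<comment> \<open>\<open>b\<^sup>2 + c a\<^sup>2\<close> is largest, subject to the constraints, when \<open>a = \<alpha> b\<close>\<close>
  have "(c * \<alpha>\<^sup>2 + 1) * (a\<^sup>2 + b\<^sup>2) - (1 + \<alpha>\<^sup>2) * (b\<^sup>2 + c * a\<^sup>2) = (1 - c) * (a\<^sup>2 - \<alpha>\<^sup>2 * b\<^sup>2)"
    by (simp add: algebra_simps)
  moreover have "0 \<le> (1 - c) * (a\<^sup>2 - \<alpha>\<^sup>2 * b\<^sup>2)" using c ba by simp
  moreover have "(c * \<alpha>\<^sup>2 + 1) * (a\<^sup>2 + b\<^sup>2) \<le> (c * \<alpha>\<^sup>2 + 1) * D\<^sup>2"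
    using ab c by (intro mult_left_mono) auto
  ultimately have "(1 + \<alpha>\<^sup>2) * (b\<^sup>2 + c * a\<^sup>2) \<le> (c * \<alpha>\<^sup>2 + 1) * D\<^sup>2" by linarith
  then have "b\<^sup>2 + c * a\<^sup>2 \<le> (c * \<alpha>\<^sup>2 + 1) * D\<^sup>2 / (1 + \<alpha>\<^sup>2)"
    by (simp add: pos_le_divide_eq add_pos_nonneg mult.commute)
  also have "\<dots> = (1 - (2 * \<gamma> - \<gamma>\<^sup>2) * \<alpha>\<^sup>2 / (\<alpha>\<^sup>2 + 1)) * D\<^sup>2"
    using pos unfolding c_def by (simp add: field_simps power2_eq_square)
  finally have "X\<^sup>2 \<le> (1 - (2 * \<gamma> - \<gamma>\<^sup>2) * \<alpha>\<^sup>2 / (\<alpha>\<^sup>2 + 1)) * D\<^sup>2"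
    using X unfolding c_def by linarith
  then have "X \<le> sqrt ((1 - (2 * \<gamma> - \<gamma>\<^sup>2) * \<alpha>\<^sup>2 / (\<alpha>\<^sup>2 + 1)) * D\<^sup>2)" by (rule real_le_rsqrt)
  then show ?thesis using D unfolding exact_rate_def min by (simp add: real_sqrt_mult)
qed

lemma exact_rate_ge:
  assumes "0 < \<gamma>" "\<gamma> < 2"
  shows "\<gamma> - 1 \<le> exact_rate \<gamma> \<alpha>"
proof (cases "\<gamma> \<le> 1")
  case False
  have "\<gamma> - 1 \<le> exact_rate \<gamma> \<alpha> * 1"
    using assms False by (intro overrelaxed_le_exact_rate[where a = 1 and b = 0]) auto
  then show ?thesis by simp
qed (use exact_rate_nonneg[OF assms, of \<alpha>] in linarith)

lemma exact_rate_le_inexact_rate: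
  assumes \<gamma>: "0 < \<gamma>" "\<gamma> < 2" and \<delta>: "0 \<le> \<delta>" "\<delta> < 1"
  shows "exact_rate \<gamma> \<alpha> + \<gamma> * \<delta> / (1 - \<delta>) \<le> inexact_rate \<gamma> \<delta> \<alpha>"
proof -
  have "\<gamma> \<le> exact_rate \<gamma> \<alpha> + min \<gamma> 1 / sqrt (\<alpha>\<^sup>2 + 1) + 1"
  proof -
    have "0 \<le> min \<gamma> 1 / sqrt (\<alpha>\<^sup>2 + 1)" using \<gamma> by simp
    then show ?thesis using exact_rate_ge[OF \<gamma>, of \<alpha>] by linarith
  qed
  then have "\<gamma> * \<delta> \<le> (exact_rate \<gamma> \<alpha> + min \<gamma> 1 / sqrt (\<alpha>\<^sup>2 + 1) + 1) * \<delta>"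
    using \<delta>(1) by (rule mult_right_mono)
  then have "exact_rate \<gamma> \<alpha> * (1 - \<delta>) + \<gamma> * \<delta> \<le> exact_rate \<gamma> \<alpha> + \<delta> * (min \<gamma> 1 / sqrt (\<alpha>\<^sup>2 + 1) + 1)"
    by (simp add: algebra_simps)
  then have "(exact_rate \<gamma> \<alpha> * (1 - \<delta>) + \<gamma> * \<delta>) / (1 - \<delta>) \<le> inexact_rate \<gamma> \<delta> \<alpha>"
    using \<delta> unfolding inexact_rate_def by (simp add: divide_right_mono)
  moreover have "exact_rate \<gamma> \<alpha> + \<gamma> * \<delta> / (1 - \<delta>) = (exact_rate \<gamma> \<alpha> * (1 - \<delta>) + \<gamma> * \<delta>) / (1 - \<delta>)"
    using \<delta> by (simp add: field_simps)
  ultimately show ?thesis by simp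
qed

lemma inexact_rate_nonneg:
  assumes "0 < \<gamma>" "\<gamma> < 2" "0 \<le> \<delta>" "\<delta> < 1"
  shows "0 \<le> inexact_rate \<gamma> \<delta> \<alpha>"
proof -
  have "0 \<le> \<gamma> * \<delta> / (1 - \<delta>)" using assms by simp
  then show ?thesis
    using exact_rate_le_inexact_rate[OF assms, of \<alpha>] exact_rate_nonneg[OF assms(1,2), of \<alpha>]
    by linarith
qed

lemma IGPPAstep_outE:
  assumes "IGPPAstep_out T zp z \<sigma> \<eta> \<delta> \<gamma> M"
  obtains w where "zp = z + \<gamma> *\<^sub>R (w - z)"
    and "normM M (w - resolvent \<sigma> M T z) \<le> \<eta>"
    and "normM M (w - resolvent \<sigma> M T z) \<le> \<delta> * normM M (w - z)"
  using assms unfolding IGPPAstep_out_def by (auto simp: algebra_simps)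

locale proximal_setting = spd_operator M for M :: "'a::euclidean_space \<Rightarrow> 'a" +
  fixes T :: "'a \<Rightarrow> 'a set"
  assumes maximal_monotone_T: "maximal_monotone T" and zeros_T_nonempty: "zeros T \<noteq> {}"
begin

lemma closed_zeros_T: "closed (zeros T)"
  using maximal_monotone_T by (rule closed_zeros)

lemma resolvent_distM_le_subregular:
  assumes \<sigma>: "0 < \<sigma>" and \<kappa>: "subreg_const T r \<kappa>" and \<kappa>\<alpha>: "lambda_max M * \<kappa> * \<alpha> \<le> \<sigma>"
    and r: "norm (resolvent \<sigma> M T z) \<le> r"
  shows "\<alpha> * distM M (resolvent \<sigma> M T z) (zeros T) \<le> normM M (z - resolvent \<sigma> M T z)"
proof -
  define J where "J = resolvent \<sigma> M T z"
  obtain u where u: "u \<in> T J" "M (z - J) = \<sigma> *\<^sub>R u"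
    using resolvent_spec[OF maximal_monotone_T \<sigma>] unfolding J_def by blast
  have \<kappa>_pos: "0 < \<kappa>" using \<kappa> unfolding subreg_const_def by simp
  have "infdist J (zeros T) \<le> \<kappa> * infdist 0 (T J)"
    using \<kappa> r u(1) unfolding subreg_const_def J_def by blast
  also have "\<dots> \<le> \<kappa> * norm u"
    using infdist_le[OF u(1), of 0] \<kappa>_pos by (simp add: mult_left_mono)
  finally have "distM M J (zeros T) \<le> sqrt (lambda_max M) * (\<kappa> * norm u)"
    using distM_le_infdist[OF closed_zeros_T zeros_T_nonempty, of J]
    by (meson mult_left_mono order_trans real_sqrt_ge_zero lambda_max_pos less_imp_le)
  then have "\<sigma> * distM M J (zeros T) \<le> sqrt (lambda_max M) * \<kappa> * norm (M (z - J))"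
    using \<sigma> u(2) by (simp add: mult_left_mono mult.assoc mult.left_commute)
  also have "\<dots> \<le> sqrt (lambda_max M) * \<kappa> * (sqrt (lambda_max M) * normM M (z - J))"
    using \<kappa>_pos lambda_max_pos by (intro mult_left_mono norm_M_le_normM) simp_all
  also have "\<dots> = lambda_max M * \<kappa> * normM M (z - J)"
    using lambda_max_pos by (simp add: algebra_simps)
  finally have "\<sigma> * distM M J (zeros T) \<le> lambda_max M * \<kappa> * normM M (z - J)" .
  moreover have "(lambda_max M * \<kappa> * \<alpha>) * distM M J (zeros T) \<le> \<sigma> * distM M J (zeros T)"
    using \<kappa>\<alpha> distM_nonneg[OF zeros_T_nonempty] by (rule mult_right_mono)
  ultimately have "(lambda_max M * \<kappa>) * (\<alpha> * distM M J (zeros T))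
      \<le> (lambda_max M * \<kappa>) * normM M (z - J)"
    by (simp add: mult.assoc)
  then show ?thesis unfolding J_def using \<kappa>_pos lambda_max_pos by simp
qed

lemma resolvent_distM_power2_le:
  assumes \<sigma>: "0 < \<sigma>"
  shows "(normM M (z - resolvent \<sigma> M T z))\<^sup>2 + (distM M (resolvent \<sigma> M T z) (zeros T))\<^sup>2
    \<le> (distM M z (zeros T))\<^sup>2"
proof -
  define J where "J = resolvent \<sigma> M T z"
  obtain p where p: "p \<in> zeros T" "distM M z (zeros T) = normM M (p - z)"
    using distM_attained[OF closed_zeros_T zeros_T_nonempty] by blast
  have "distM M J (zeros T) \<le> normM M (J - p)"
    using distM_le[OF p(1), of J] normM_minus_commute by simp
  then have "(distM M J (zeros T))\<^sup>2 \<le> (normM M (J - p))\<^sup>2"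
    using distM_nonneg[OF zeros_T_nonempty] by (simp add: power_mono)
  moreover have "(normM M (z - J))\<^sup>2 + (normM M (J - p))\<^sup>2 \<le> (normM M (z - p))\<^sup>2"
    unfolding J_def
    by (intro normM_power2_add_le resolvent_zeros_inner_nonneg maximal_monotone_T \<sigma> p(1))
  ultimately show ?thesis using p(2) normM_minus_commute[of p z] unfolding J_def by simp
qed

lemma relaxed_resolvent_distM_le:
  assumes \<sigma>: "0 < \<sigma>" and \<gamma>: "0 < \<gamma>" "\<gamma> < 2" and \<alpha>: "0 \<le> \<alpha>"
    and subreg: "\<alpha> * distM M (resolvent \<sigma> M T z) (zeros T) \<le> normM M (z - resolvent \<sigma> M T z)"
  shows "distM M (z + \<gamma> *\<^sub>R (resolvent \<sigma> M T z - z)) (zeros T)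
    \<le> exact_rate \<gamma> \<alpha> * distM M z (zeros T)"
proof -
  define J D a b where "J = resolvent \<sigma> M T z" and "D = distM M z (zeros T)"
    and "a = normM M (z - J)" and "b = distM M J (zeros T)"
  have D: "0 \<le> D" and b: "0 \<le> b" using distM_nonneg[OF zeros_T_nonempty] unfolding D_def b_def
    by auto
  have pyth: "a\<^sup>2 + b\<^sup>2 \<le> D\<^sup>2"
    using resolvent_distM_power2_le[OF \<sigma>] unfolding a_def b_def D_def J_def .
  have ab: "\<alpha>\<^sup>2 * b\<^sup>2 \<le> a\<^sup>2"
    using power_mono[OF subreg, of 2] \<alpha> b unfolding a_def b_def J_def
    by (simp add: power_mult_distrib)
  obtain p where p: "p \<in> zeros T" "D = normM M (z - p)"
    using distM_attained[OF closed_zeros_T zeros_T_nonempty, of z] normM_minus_commute[of _ z]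
    unfolding D_def by auto
  obtain q where q: "q \<in> zeros T" "b = normM M (J - q)"
    using distM_attained[OF closed_zeros_T zeros_T_nonempty, of J] normM_minus_commute[of _ J]
    unfolding b_def by auto
  have "\<exists>m\<in>zeros T. normM M (z + \<gamma> *\<^sub>R (J - z) - m) \<le> exact_rate \<gamma> \<alpha> * D"
  proof (cases "\<gamma> \<le> 1")
    case True
    \<comment> \<open>an underrelaxed step is a convex combination of \<open>z\<close> and \<open>J\<close>; compare it with the same
      combination of their projections\<close>
    define m where "m = (1 - \<gamma>) *\<^sub>R p + \<gamma> *\<^sub>R q"
    have "m \<in> zeros T"
      using convexD[OF convex_zeros[OF maximal_monotone_T] p(1) q(1), of "1 - \<gamma>" \<gamma>] \<gamma> True
      unfolding m_def by simp
    have "z + \<gamma> *\<^sub>R (J - z) - m = (1 - \<gamma>) *\<^sub>R (z - p) + \<gamma> *\<^sub>R (J - q)"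
      unfolding m_def by (simp add: algebra_simps)
    then have "(normM M (z + \<gamma> *\<^sub>R (J - z) - m))\<^sup>2 \<le> (1 - \<gamma>) * D\<^sup>2 + \<gamma> * b\<^sup>2"
      using normM_convex_combination_power2[of \<gamma> "z - p" "J - q"] \<gamma> True p(2) q(2) by simp
    moreover have "(1 + \<alpha>\<^sup>2) * b\<^sup>2 \<le> D\<^sup>2" using pyth ab by (simp add: algebra_simps)
    ultimately show ?thesis
      using \<open>m \<in> zeros T\<close> underrelaxed_le_exact_rate[OF \<gamma>(1) True D] by blast
  next
    case False
    have "(normM M (z + \<gamma> *\<^sub>R (J - z) - q))\<^sup>2 \<le> b\<^sup>2 + (\<gamma> - 1)\<^sup>2 * a\<^sup>2"
      using resolvent_zeros_inner_nonneg[OF maximal_monotone_T \<sigma> q(1), of z] False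
      unfolding normM_relaxation_power2 a_def q(2) J_def
      by (simp add: power2_commute[of 1 \<gamma>] mult_nonpos_nonneg)
    then show ?thesis using q(1) overrelaxed_le_exact_rate[OF _ \<gamma>(2) D pyth ab] False by auto
  qed
  then obtain m where "m \<in> zeros T" "normM M (z + \<gamma> *\<^sub>R (J - z) - m) \<le> exact_rate \<gamma> \<alpha> * D" by blast
  then show ?thesis
    using distM_le[of m "zeros T" "z + \<gamma> *\<^sub>R (J - z)"] normM_minus_commute unfolding J_def D_def
    by simp
qed

lemma resolvent_normM_le_distM:
  assumes "0 < \<sigma>"
  shows "normM M (z - resolvent \<sigma> M T z) \<le> distM M z (zeros T)"
proof (rule power2_le_imp_le)
  show "(normM M (z - resolvent \<sigma> M T z))\<^sup>2 \<le> (distM M z (zeros T))\<^sup>2"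
    using resolvent_distM_power2_le[OF assms, of z]
      zero_le_power2[of "distM M (resolvent \<sigma> M T z) (zeros T)"] by linarith
qed (rule distM_nonneg[OF zeros_T_nonempty])

lemma distM_le_resolvent_normM:
  assumes \<sigma>: "0 < \<sigma>" and \<alpha>: "0 \<le> \<alpha>"
    and subreg: "\<alpha> * distM M (resolvent \<sigma> M T z) (zeros T) \<le> normM M (z - resolvent \<sigma> M T z)"
  shows "(1 - sqrt (1 / (\<alpha>\<^sup>2 + 1))) * distM M z (zeros T) \<le> normM M (z - resolvent \<sigma> M T z)"
proof -
  define J D a b where "J = resolvent \<sigma> M T z" and "D = distM M z (zeros T)"
    and "a = normM M (z - J)" and "b = distM M J (zeros T)"
  have D: "0 \<le> D" and b: "0 \<le> b" using distM_nonneg[OF zeros_T_nonempty] unfolding D_def b_def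
    by auto
  have "\<alpha>\<^sup>2 * b\<^sup>2 \<le> a\<^sup>2"
    using power_mono[OF subreg, of 2] \<alpha> b unfolding a_def b_def J_def
    by (simp add: power_mult_distrib)
  then have "(\<alpha>\<^sup>2 + 1) * b\<^sup>2 \<le> D\<^sup>2"
    using resolvent_distM_power2_le[OF \<sigma>, of z] unfolding a_def b_def D_def J_def
    by (simp add: algebra_simps)
  moreover have "0 < \<alpha>\<^sup>2 + 1" by (simp add: add_nonneg_pos)
  ultimately have "b\<^sup>2 \<le> D\<^sup>2 * (1 / (\<alpha>\<^sup>2 + 1))" by (simp add: pos_le_divide_eq mult.commute)
  then have "b \<le> sqrt (D\<^sup>2 * (1 / (\<alpha>\<^sup>2 + 1)))" by (rule real_le_rsqrt)
  then have "b \<le> sqrt (1 / (\<alpha>\<^sup>2 + 1)) * D" using D unfolding real_sqrt_mult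
    by (simp add: mult.commute)
  moreover have "D \<le> b + a"
  proof -
    obtain q where "q \<in> zeros T" "b = normM M (q - J)"
      using distM_attained[OF closed_zeros_T zeros_T_nonempty] unfolding b_def by metis
    then show ?thesis
      using distM_le[of q "zeros T" z] normM_triangle_diff[of q z J] normM_minus_commute[of J z]
      unfolding D_def a_def by simp
  qed
  ultimately show ?thesis unfolding D_def a_def J_def by (simp add: algebra_simps)
qed

lemma IGPPA_step_normM_bounds:
  assumes step: "IGPPAstep_out T zp z \<sigma> \<eta> \<delta> \<gamma> M"
    and \<sigma>: "0 < \<sigma>" and \<gamma>: "0 < \<gamma>" and \<delta>: "0 \<le> \<delta>" "\<delta> < 1" and \<alpha>: "0 \<le> \<alpha>"
    and subreg: "\<alpha> * distM M (resolvent \<sigma> M T z) (zeros T) \<le> normM M (z - resolvent \<sigma> M T z)"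
  shows "normM M (zp - z) \<le> \<gamma> / (1 - \<delta>) * distM M z (zeros T)"
    and "\<gamma> * (1 - sqrt (1 / (\<alpha>\<^sup>2 + 1))) / (1 + \<delta>) * distM M z (zeros T) \<le> normM M (zp - z)"
proof -
  obtain w where zp: "zp = z + \<gamma> *\<^sub>R (w - z)"
    and w: "normM M (w - resolvent \<sigma> M T z) \<le> \<delta> * normM M (w - z)"
    using step by (rule IGPPAstep_outE)
  have step_eq: "normM M (zp - z) = \<gamma> * normM M (w - z)"
    unfolding zp using \<gamma> by (simp add: normM_scaleR)
  have "(1 - \<delta>) * normM M (w - z) \<le> distM M z (zeros T)"
    using inexact_point_normM_bounds(1)[OF w] resolvent_normM_le_distM[OF \<sigma>, of z] by linarith
  then have "normM M (w - z) \<le> distM M z (zeros T) / (1 - \<delta>)"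
    using \<delta> by (simp add: pos_le_divide_eq mult.commute)
  then have "\<gamma> * normM M (w - z) \<le> \<gamma> * (distM M z (zeros T) / (1 - \<delta>))"
    by (rule mult_left_mono) (use \<gamma> in linarith)
  then show "normM M (zp - z) \<le> \<gamma> / (1 - \<delta>) * distM M z (zeros T)" unfolding step_eq by simp
  have "(1 - sqrt (1 / (\<alpha>\<^sup>2 + 1))) * distM M z (zeros T) \<le> (1 + \<delta>) * normM M (w - z)"
    using inexact_point_normM_bounds(2)[OF w] distM_le_resolvent_normM[OF \<sigma> \<alpha> subreg] by linarith
  then have "(1 - sqrt (1 / (\<alpha>\<^sup>2 + 1))) * distM M z (zeros T) / (1 + \<delta>) \<le> normM M (w - z)"
    using \<delta> by (simp add: pos_divide_le_eq mult.commute)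
  then have "\<gamma> * ((1 - sqrt (1 / (\<alpha>\<^sup>2 + 1))) * distM M z (zeros T) / (1 + \<delta>)) \<le> \<gamma> * normM M (w - z)"
    by (rule mult_left_mono) (use \<gamma> in linarith)
  then show "\<gamma> * (1 - sqrt (1 / (\<alpha>\<^sup>2 + 1))) / (1 + \<delta>) * distM M z (zeros T) \<le> normM M (zp - z)"
    unfolding step_eq by simp
qed

lemma IGPPA_step_distM_le:
  assumes step: "IGPPAstep_out T zp z \<sigma> \<eta> \<delta> \<gamma> M"
    and \<sigma>: "0 < \<sigma>" and \<gamma>: "0 < \<gamma>" "\<gamma> < 2" and \<delta>: "0 \<le> \<delta>" "\<delta> < 1" and \<alpha>: "0 \<le> \<alpha>"
    and subreg: "\<alpha> * distM M (resolvent \<sigma> M T z) (zeros T) \<le> normM M (z - resolvent \<sigma> M T z)"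
  shows "distM M zp (zeros T) \<le> inexact_rate \<gamma> \<delta> \<alpha> * distM M z (zeros T)"
proof -
  define J D where "J = resolvent \<sigma> M T z" and "D = distM M z (zeros T)"
  obtain w where zp: "zp = z + \<gamma> *\<^sub>R (w - z)"
    and w: "normM M (w - J) \<le> \<delta> * normM M (w - z)"
    using step unfolding J_def by (rule IGPPAstep_outE)
  have "(1 - \<delta>) * normM M (w - z) \<le> D"
    using inexact_point_normM_bounds(1)[OF w] resolvent_normM_le_distM[OF \<sigma>, of z]
    unfolding J_def D_def by linarith
  then have "normM M (w - z) \<le> D / (1 - \<delta>)" using \<delta> by (simp add: pos_le_divide_eq mult.commute)
  then have "\<delta> * normM M (w - z) \<le> \<delta> * (D / (1 - \<delta>))" by (rule mult_left_mono) (use \<delta> in linarith)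
  then have "normM M (w - J) \<le> \<delta> * (D / (1 - \<delta>))" using w by linarith
  then have "\<gamma> * normM M (w - J) \<le> \<gamma> * (\<delta> * (D / (1 - \<delta>)))"
    by (rule mult_left_mono) (use \<gamma> in linarith)
  moreover have "zp - (z + \<gamma> *\<^sub>R (J - z)) = \<gamma> *\<^sub>R (w - J)" unfolding zp by (simp add: algebra_simps)
  then have "normM M (zp - (z + \<gamma> *\<^sub>R (J - z))) = \<gamma> * normM M (w - J)" using \<gamma>
    by (simp add: normM_scaleR)
  ultimately have "distM M zp (zeros T) \<le> exact_rate \<gamma> \<alpha> * D + \<gamma> * (\<delta> * (D / (1 - \<delta>)))"
    using distM_le_distM_add[OF closed_zeros_T zeros_T_nonempty, of zp "z + \<gamma> *\<^sub>R (J - z)"]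
      relaxed_resolvent_distM_le[OF \<sigma> \<gamma> \<alpha> subreg] unfolding J_def D_def by linarith
  also have "\<dots> = (exact_rate \<gamma> \<alpha> + \<gamma> * \<delta> / (1 - \<delta>)) * D" by (simp add: algebra_simps)
  also have "\<dots> \<le> inexact_rate \<gamma> \<delta> \<alpha> * D"
    using exact_rate_le_inexact_rate[OF \<gamma> \<delta>] distM_nonneg[OF zeros_T_nonempty]
    unfolding D_def by (rule mult_right_mono)
  finally show ?thesis unfolding D_def .
qed

lemma IGPPA_quasi_fejer:
  assumes step: "\<And>k. IGPPAstep_out T (z (Suc k)) (z k) (\<sigma> k) (\<eta> k) \<delta> \<gamma> M"
    and \<sigma>: "\<And>k. 0 < \<sigma> k" and \<gamma>: "0 < \<gamma>" "\<gamma> < 2" and q: "q \<in> zeros T"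
  shows "normM M (z k - q) \<le> normM M (z 0 - q) + \<gamma> * (\<Sum>i<k. \<eta> i)"
proof (induction k)
  case (Suc k)
  define J where "J = resolvent (\<sigma> k) M T (z k)"
  obtain w where zp: "z (Suc k) = z k + \<gamma> *\<^sub>R (w - z k)" and w: "normM M (w - J) \<le> \<eta> k"
    using step[of k] unfolding J_def by (rule IGPPAstep_outE)
  have "z (Suc k) - q = (z k + \<gamma> *\<^sub>R (J - z k) - q) + \<gamma> *\<^sub>R (w - J)"
    unfolding zp by (simp add: algebra_simps)
  then have "normM M (z (Suc k) - q)
      \<le> normM M (z k + \<gamma> *\<^sub>R (J - z k) - q) + normM M (\<gamma> *\<^sub>R (w - J))"
    by (metis normM_triangle)
  also have "\<dots> = normM M (z k + \<gamma> *\<^sub>R (J - z k) - q) + \<gamma> * normM M (w - J)"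
    using \<gamma> by (simp add: normM_scaleR)
  also have "\<dots> \<le> normM M (z k - q) + \<gamma> * \<eta> k"
    using relaxation_fejer[OF resolvent_zeros_inner_nonneg[OF maximal_monotone_T \<sigma> q]] w \<gamma>
    unfolding J_def by (intro add_mono mult_left_mono) auto
  finally show ?case using Suc.IH by (simp add: algebra_simps)
qed simp

lemma IGPPA_resolvent_norm_le:
  assumes step: "\<And>k. IGPPAstep_out T (z (Suc k)) (z k) (\<sigma> k) (\<eta> k) \<delta> \<gamma> M"
    and \<sigma>: "\<And>k. 0 < \<sigma> k" and \<gamma>: "0 < \<gamma>" "\<gamma> < 2" and q: "q \<in> zeros T"
    and \<eta>: "\<And>k. 0 \<le> \<eta> k" "summable \<eta>" and \<lambda>: "lambda_min M \<le> 1"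
  shows "norm (resolvent (\<sigma> k) M T (z k))
    \<le> norm q + (1 / lambda_min M) * (normM M (z 0 - q) + \<gamma> * (\<Sum>k. \<eta> k))"
proof -
  define J B where "J = resolvent (\<sigma> k) M T (z k)" and "B = normM M (z 0 - q) + \<gamma> * (\<Sum>k. \<eta> k)"
  have "(normM M (J - q))\<^sup>2 \<le> (normM M (z k - q))\<^sup>2"
    using normM_power2_add_le[OF resolvent_zeros_inner_nonneg[OF maximal_monotone_T \<sigma>[of k] q,
          of "z k"]]
      zero_le_power2[of "normM M (z k - J)"] unfolding J_def by linarith
  then have "normM M (J - q) \<le> normM M (z k - q)" by (rule power2_le_imp_le) simp
  also have "\<dots> \<le> B"
  proof -
    have "(\<Sum>i<k. \<eta> i) \<le> (\<Sum>k. \<eta> k)" using sum_le_suminf[OF \<eta>(2)] \<eta>(1) by blast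
    then have "\<gamma> * (\<Sum>i<k. \<eta> i) \<le> \<gamma> * (\<Sum>k. \<eta> k)" by (rule mult_left_mono) (use \<gamma> in linarith)
    then show ?thesis
      using IGPPA_quasi_fejer[where z = z and \<sigma> = \<sigma> and \<eta> = \<eta>, OF step \<sigma> \<gamma> q, of k]
      unfolding B_def by linarith
  qed
  finally have "sqrt (lambda_min M) * norm (J - q) \<le> B" using norm_le_normM[of "J - q"] by linarith
  moreover have "lambda_min M \<le> sqrt (lambda_min M)"
    using mult_right_mono[OF \<lambda>, of "lambda_min M"] lambda_min_pos
    by (intro real_le_rsqrt) (simp add: power2_eq_square)
  ultimately have "lambda_min M * norm (J - q) \<le> B"
    using mult_right_mono[of "lambda_min M" "sqrt (lambda_min M)" "norm (J - q)"] by simp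
  then have "norm (J - q) \<le> (1 / lambda_min M) * B" using lambda_min_pos by (simp add: field_simps)
  then show ?thesis using norm_triangle_sub[of J q] unfolding J_def B_def by linarith
qed

end

lemma le_Min_geometric:
  fixes D s :: "nat \<Rightarrow> real"
  assumes \<rho>: "0 \<le> \<rho>" and D: "\<And>k. D (Suc k) \<le> \<rho> * D k"
    and upper: "\<And>k. s k \<le> A * D k" and lower: "\<And>k. B * D k \<le> s k" and A: "0 \<le> A" and B: "0 < B"
  shows "s k \<le> A / B * Min ((\<lambda>j. \<rho> ^ (k - j) * s j) ` {..k})"
proof -
  have geometric: "D k \<le> \<rho> ^ (k - j) * D j" if "j \<le> k" for j
    using that
  proof (induction k rule: dec_induct)
    case (step k)
    have "D (Suc k) \<le> \<rho> * (\<rho> ^ (k - j) * D j)" using D[of k] mult_left_mono[OF step.IH \<rho>]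
      by linarith
    then show ?case using step.hyps by (simp add: Suc_diff_le)
  qed simp
  have bound: "s k \<le> A / B * (\<rho> ^ (k - j) * s j)" if "j \<le> k" for j
  proof -
    have "s k \<le> A * (\<rho> ^ (k - j) * D j)" using upper[of k] mult_left_mono[OF geometric[OF that] A]
      by linarith
    also have "\<dots> \<le> A * (\<rho> ^ (k - j) * (s j / B))"
      using lower[of j] A \<rho> B
      by (intro mult_left_mono) (simp_all add: pos_le_divide_eq mult.commute)
    finally show ?thesis by (simp add: algebra_simps)
  qed
  have "Min ((\<lambda>j. \<rho> ^ (k - j) * s j) ` {..k}) \<in> (\<lambda>j. \<rho> ^ (k - j) * s j) ` {..k}"
    by (rule Min_in) auto
  then obtain j where "j \<le> k" and "Min ((\<lambda>j. \<rho> ^ (k - j) * s j) ` {..k}) = \<rho> ^ (k - j) * s j"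
    by blast
  then show ?thesis using bound[of j] by simp
qed

theorem corollary3:
  fixes T :: "'a::euclidean_space \<Rightarrow> 'a set" and M :: "'a \<Rightarrow> 'a"
    and z :: "nat \<Rightarrow> 'a" and \<sigma> \<eta> :: "nat \<Rightarrow> real"
    and \<gamma> \<delta> r \<kappa> \<alpha> :: real and zbar0 :: 'a
  assumes T_mm: "maximal_monotone T"
    and Omega_ne: "zeros T \<noteq> {}"
    and M_sa: "self_adjoint M" and M_pd: "pos_def M" and M_max: "lambda_max M = 1"
    and T_bms: "bounded_metric_subregular T"
    and gamma: "0 < \<gamma>" "\<gamma> < 2"
    and delta: "0 \<le> \<delta>" "\<delta> < 1/2"
    and sigma_nn: "\<And>k. 0 \<le> \<sigma> k" and eta_nn: "\<And>k. 0 \<le> \<eta> k"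
    and eta_sum: "summable \<eta>"
    and sigma_inf: "0 < (INF k. \<sigma> k)"
    and step: "\<And>k. IGPPAstep_out T (z (Suc k)) (z k) (\<sigma> k) (\<eta> k) \<delta> \<gamma> M"
    and zbar0: "zbar0 \<in> zeros T" "\<And>d. d \<in> zeros T \<Longrightarrow> normM M (zbar0 - z 0) \<le> normM M (d - z 0)"
    and r: "r \<ge> norm zbar0 + (1 / lambda_min M) * (distM M (z 0) (zeros T) + \<gamma> * (\<Sum>k. \<eta> k))"
    and kappa: "subreg_const T r \<kappa>"
    and alpha: "0 < \<alpha>"
    and rho: "(1 / (1 - \<delta>)) * (sqrt (1 - min \<gamma> (2*\<gamma> - \<gamma>^2) * \<alpha>^2 / (\<alpha>^2 + 1))
               + \<delta> * (min \<gamma> 1 / sqrt (\<alpha>^2 + 1) + 1)) < 1"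
    and sigma_ge: "\<And>k. \<sigma> k \<ge> \<kappa> * \<alpha>"
  shows "\<forall>k. normM M (z (Suc k) - z k) \<le>
    (let \<rho> = (1 / (1 - \<delta>)) * (sqrt (1 - min \<gamma> (2*\<gamma> - \<gamma>^2) * \<alpha>^2 / (\<alpha>^2 + 1))
               + \<delta> * (min \<gamma> 1 / sqrt (\<alpha>^2 + 1) + 1));
         C = (1 + \<delta>) / ((1 - \<delta>) * (1 - sqrt (1 / (\<alpha>^2 + 1))))
     in C * Min ((\<lambda>j. \<rho> ^ (k - j) * normM M (z (Suc j) - z j)) ` {..k}))"
proof -
  interpret proximal_setting M T
    using M_sa M_pd T_mm Omega_ne by unfold_locales
  have \<kappa>: "0 < \<kappa>" using kappa unfolding subreg_const_def by simp
  have \<sigma>: "0 < \<sigma> k" for k using mult_pos_pos[OF \<kappa> alpha] sigma_ge[of k] by linarith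
  have \<delta>: "0 \<le> \<delta>" "\<delta> < 1" using delta by auto
  have \<lambda>: "lambda_min M \<le> 1" using self_adjoint_lambda_min_le_lambda_max[OF M_sa] M_max by simp
  have "distM M (z 0) (zeros T) = normM M (z 0 - zbar0)"
    using distM_eqI[of zbar0 "zeros T" "z 0"] zbar0 normM_minus_commute by simp
  then have "norm (resolvent (\<sigma> k) M T (z k)) \<le> r" for k
    using IGPPA_resolvent_norm_le[where z = z and \<sigma> = \<sigma> and \<eta> = \<eta>,
        OF step \<sigma> gamma zbar0(1) eta_nn eta_sum \<lambda>, of k] r by simp
  then have subreg: "\<alpha> * distM M (resolvent (\<sigma> k) M T (z k)) (zeros T)
      \<le> normM M (z k - resolvent (\<sigma> k) M T (z k))" for k
    using sigma_ge[of k] M_max by (intro resolvent_distM_le_subregular[OF \<sigma> kappa]) simp_all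
  define t where "t = sqrt (1 / (\<alpha>\<^sup>2 + 1))"
  have "t < 1" using alpha unfolding t_def by (simp add: add_pos_nonneg)
  have "normM M (z (Suc k) - z k) \<le> (\<gamma> / (1 - \<delta>)) / (\<gamma> * (1 - t) / (1 + \<delta>)) *
      Min ((\<lambda>j. inexact_rate \<gamma> \<delta> \<alpha> ^ (k - j) * normM M (z (Suc j) - z j)) ` {..k})" for k
  proof (rule le_Min_geometric[where D = "\<lambda>k. distM M (z k) (zeros T)"])
    show "distM M (z (Suc k)) (zeros T) \<le> inexact_rate \<gamma> \<delta> \<alpha> * distM M (z k) (zeros T)" for k
      using IGPPA_step_distM_le[OF step \<sigma> gamma \<delta> _ subreg] alpha by simp
    show "normM M (z (Suc k) - z k) \<le> \<gamma> / (1 - \<delta>) * distM M (z k) (zeros T)"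
      "\<gamma> * (1 - t) / (1 + \<delta>) * distM M (z k) (zeros T) \<le> normM M (z (Suc k) - z k)" for k
      using IGPPA_step_normM_bounds[OF step \<sigma> gamma(1) \<delta> _ subreg] alpha unfolding t_def by simp_all
  qed (use inexact_rate_nonneg[OF gamma \<delta>] gamma \<delta> \<open>t < 1\<close> in simp_all)
  moreover have "(\<gamma> / (1 - \<delta>)) / (\<gamma> * (1 - t) / (1 + \<delta>)) = (1 + \<delta>) / ((1 - \<delta>) * (1 - t))"
    using gamma by (simp add: divide_divide_times_eq mult.left_commute[of "1 - \<delta>" \<gamma>])
  ultimately show ?thesis unfolding Let_def inexact_rate_def exact_rate_def t_def by simp
qed

end
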